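(* Let $S$ be an operator system with quasistate space $K\subseteq S^*$. Then $S$ is approximately positively generated if and only if $S^+$ separates the points of $K$.
   Context: An operator system here is a (possibly nonunital) matrix ordered operator space $S$ admitting a completely isometric complete order embedding into some $B(H)$; $S^+$ is its first-level positive cone. The quasistate space is $K=\{\phi\in S^*:\|\phi\|\le1,\ \phi(S^+)\subseteq[0,\infty)\}$. $S$ is approximately positively generated if $S^+-S^+$ is norm-dense in the selfadjoint part $S^{sa}$. "$S^+$ separates points of $K$" means that for distinct $\phi,\psi\in K$ there is $p\in S^+$ with $\phi(p)\ne\psi(p)$. *)

theory Defs
  imports Complex_Main
begin

definition hnorm :: "('h \<Rightarrow> 'h \<Rightarrow> complex) \<Rightarrow> 'h \<Rightarrow> real" where
  "hnorm ip x = sqrt (Re (ip x x))"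

definition hilbert_space ::
  "(complex \<Rightarrow> 'h::ab_group_add \<Rightarrow> 'h) \<Rightarrow> ('h \<Rightarrow> 'h \<Rightarrow> complex) \<Rightarrow> bool" where
  "hilbert_space sc ip \<longleftrightarrow>
     (\<forall>a x y. sc a (x + y) = sc a x + sc a y) \<and>
     (\<forall>a b x. sc (a + b) x = sc a x + sc b x) \<and>
     (\<forall>a b x. sc a (sc b x) = sc (a * b) x) \<and>
     (\<forall>x. sc 1 x = x) \<and>
     (\<forall>x y z. ip (x + y) z = ip x z + ip y z) \<and>
     (\<forall>a x y. ip (sc a x) y = a * ip x y) \<and>
     (\<forall>x y. ip y x = cnj (ip x y)) \<and>
     (\<forall>x. 0 \<le> Re (ip x x)) \<and>
     (\<forall>x. ip x x = 0 \<longrightarrow> x = 0) \<and>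
     (\<forall>X :: nat \<Rightarrow> 'h.
        (\<forall>e>0. \<exists>N. \<forall>m\<ge>N. \<forall>n\<ge>N. hnorm ip (X m - X n) < e) \<longrightarrow>
        (\<exists>L. \<forall>e>0. \<exists>N. \<forall>n\<ge>N. hnorm ip (X n - L) < e))"

definition bounded_op ::
  "(complex \<Rightarrow> 'h::ab_group_add \<Rightarrow> 'h) \<Rightarrow> ('h \<Rightarrow> 'h \<Rightarrow> complex) \<Rightarrow> ('h \<Rightarrow> 'h) \<Rightarrow> bool" where
  "bounded_op sc ip T \<longleftrightarrow>
     (\<forall>x y. T (x + y) = T x + T y) \<and> (\<forall>a x. T (sc a x) = sc a (T x)) \<and>
     (\<exists>C. \<forall>x. hnorm ip (T x) \<le> C * hnorm ip x)"

definition opnorm :: "('h \<Rightarrow> 'h \<Rightarrow> complex) \<Rightarrow> ('h \<Rightarrow> 'h) \<Rightarrow> real" where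
  "opnorm ip T = Sup ((\<lambda>x. hnorm ip (T x)) ` {x. hnorm ip x \<le> 1})"

definition adj :: "('h \<Rightarrow> 'h \<Rightarrow> complex) \<Rightarrow> ('h \<Rightarrow> 'h) \<Rightarrow> ('h \<Rightarrow> 'h)" where
  "adj ip T = (THE A. \<forall>x y. ip (T x) y = ip x (A y))"

definition pos_op :: "('h \<Rightarrow> 'h \<Rightarrow> complex) \<Rightarrow> ('h \<Rightarrow> 'h) \<Rightarrow> bool" where
  "pos_op ip T \<longleftrightarrow> (\<forall>x. Im (ip (T x) x) = 0 \<and> 0 \<le> Re (ip (T x) x))"

text \<open>A (concrete, possibly nonunital) operator system: a self-adjoint complex subspace
 of B(H), with norm the operator norm and matrix order inherited from B(H).\<close>
definition operator_system ::
  "(complex \<Rightarrow> 'h::ab_group_add \<Rightarrow> 'h) \<Rightarrow> ('h \<Rightarrow> 'h \<Rightarrow> complex) \<Rightarrow> ('h \<Rightarrow> 'h) set \<Rightarrow> bool" where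
  "operator_system sc ip S \<longleftrightarrow>
     hilbert_space sc ip \<and>
     (\<forall>T\<in>S. bounded_op sc ip T) \<and>
     (\<lambda>x. 0) \<in> S \<and>
     (\<forall>T\<in>S. \<forall>U\<in>S. (\<lambda>x. T x + U x) \<in> S) \<and>
     (\<forall>a. \<forall>T\<in>S. (\<lambda>x. sc a (T x)) \<in> S) \<and>
     (\<forall>T\<in>S. adj ip T \<in> S)"

definition pos_cone :: "('h \<Rightarrow> 'h \<Rightarrow> complex) \<Rightarrow> ('h \<Rightarrow> 'h) set \<Rightarrow> ('h \<Rightarrow> 'h) set" where
  "pos_cone ip S = {T\<in>S. pos_op ip T}"

definition sa_part :: "('h \<Rightarrow> 'h \<Rightarrow> complex) \<Rightarrow> ('h \<Rightarrow> 'h) set \<Rightarrow> ('h \<Rightarrow> 'h) set" where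
  "sa_part ip S = {T\<in>S. adj ip T = T}"

text \<open>Quasistate space K: complex-linear functionals on S (represented extensionally,
 i.e. zero off S) of norm at most 1 that are nonnegative on S^+.\<close>
definition quasistates ::
  "(complex \<Rightarrow> 'h::ab_group_add \<Rightarrow> 'h) \<Rightarrow> ('h \<Rightarrow> 'h \<Rightarrow> complex) \<Rightarrow> ('h \<Rightarrow> 'h) set
    \<Rightarrow> (('h \<Rightarrow> 'h) \<Rightarrow> complex) set" where
  "quasistates sc ip S = {\<phi>.
     (\<forall>T. T \<notin> S \<longrightarrow> \<phi> T = 0) \<and>
     (\<forall>T\<in>S. \<forall>U\<in>S. \<phi> (\<lambda>x. T x + U x) = \<phi> T + \<phi> U) \<and>
     (\<forall>a. \<forall>T\<in>S. \<phi> (\<lambda>x. sc a (T x)) = a * \<phi> T) \<and>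
     (\<forall>T\<in>S. cmod (\<phi> T) \<le> opnorm ip T) \<and>
     (\<forall>p\<in>pos_cone ip S. Im (\<phi> p) = 0 \<and> 0 \<le> Re (\<phi> p))}"

definition approx_pos_generated :: "('h::ab_group_add \<Rightarrow> 'h \<Rightarrow> complex) \<Rightarrow> ('h \<Rightarrow> 'h) set \<Rightarrow> bool" where
  "approx_pos_generated ip S \<longleftrightarrow>
     (\<forall>T\<in>sa_part ip S. \<forall>e>0. \<exists>p\<in>pos_cone ip S. \<exists>q\<in>pos_cone ip S.
        opnorm ip (\<lambda>x. T x - (p x - q x)) < e)"

definition separates_points :: "('h \<Rightarrow> 'h) set \<Rightarrow> (('h \<Rightarrow> 'h) \<Rightarrow> complex) set \<Rightarrow> bool" where
  "separates_points P K \<longleftrightarrow> (\<forall>\<phi>\<in>K. \<forall>\<psi>\<in>K. \<phi> \<noteq> \<psi> \<longrightarrow> (\<exists>p\<in>P. \<phi> p \<noteq> \<psi> p))"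

end

theory Submission
  imports Defs "HOL-Library.Function_Algebras"
begin

text \<open>If \<open>S\<^sup>+ - S\<^sup>+\<close> is dense in the self-adjoint part, two quasistates that agree on
  \<open>S\<^sup>+\<close> agree on every self-adjoint element by continuity, hence on all of \<open>S\<close>, since every
  element is \<open>A + iB\<close> with \<open>A\<close>, \<open>B\<close> self-adjoint. Conversely, let a self-adjoint \<open>T\<^sub>0\<close>
  have distance \<open>e > 0\<close> from \<open>S\<^sup>+ - S\<^sup>+\<close>. Taking real parts does not increase norms, so
  \<open>T\<^sub>0\<close> also has distance at least \<open>e\<close> from the complex span of \<open>S\<^sup>+\<close>, and Hahn--Banach
  yields a real functional of norm at most one that vanishes on this span and equals \<open>e\<close> at
  \<open>T\<^sub>0\<close>. Its complexification is a nonzero quasistate that \<open>S\<^sup>+\<close> cannot separate from the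
  zero quasistate. The adjoints behind the decomposition \<open>A + iB\<close> exist by the Riesz
  representation theorem.\<close>

section \<open>Hahn--Banach extension\<close>

locale real_vector_on =
  fixes V :: "'a::ab_group_add set" and smul :: "real \<Rightarrow> 'a \<Rightarrow> 'a"
  assumes zero_mem: "0 \<in> V"
    and add_mem: "\<And>x y. x \<in> V \<Longrightarrow> y \<in> V \<Longrightarrow> x + y \<in> V"
    and smul_mem: "\<And>r x. x \<in> V \<Longrightarrow> smul r x \<in> V"
    and smul_add_right: "\<And>a x y. smul a (x + y) = smul a x + smul a y"
    and smul_add_left: "\<And>a b x. smul (a + b) x = smul a x + smul b x"
    and smul_smul: "\<And>a b x. smul a (smul b x) = smul (a * b) x"
    and smul_one [simp]: "\<And>x. smul 1 x = x"
begin

lemma smul_zero_left [simp]: "smul 0 x = 0"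
  using smul_add_left[of 0 0 x] by simp

lemma smul_zero_right [simp]: "smul a 0 = 0"
  using smul_add_right[of a 0 0] by simp

lemma smul_minus_left: "smul (- a) x = - smul a x"
  using minus_unique[of "smul a x" "smul (- a) x"] smul_add_left[of a "- a" x] by simp

lemma smul_minus_right: "smul a (- x) = - smul a x"
  using minus_unique[of "smul a x" "smul a (- x)"] smul_add_right[of a x "- x"] by simp

lemma smul_diff_right: "smul a (x - y) = smul a x - smul a y"
  using smul_add_right[of a x "- y"] smul_minus_right by simp

lemma smul_diff_left: "smul (a - b) x = smul a x - smul b x"
  using smul_add_left[of a "- b" x] smul_minus_left by simp

lemma diff_mem: "x \<in> V \<Longrightarrow> y \<in> V \<Longrightarrow> x - y \<in> V"
  using add_mem[of x "smul (- 1) y"] smul_mem[of y "- 1"] by (simp add: smul_minus_left)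

end

locale sublinear_on = real_vector_on +
  fixes p :: "'a::ab_group_add \<Rightarrow> real"
  assumes subadditive: "\<And>x y. x \<in> V \<Longrightarrow> y \<in> V \<Longrightarrow> p (x + y) \<le> p x + p y"
    and pos_homogeneous: "\<And>r x. 0 < r \<Longrightarrow> x \<in> V \<Longrightarrow> p (smul r x) = r * p x"
begin

text \<open>Partial functionals are handled through their graphs, so that Zorn's lemma can be
  applied to the inclusion order.\<close>

definition dominated_graph :: "('a \<times> real) set \<Rightarrow> bool" where
  "dominated_graph G \<longleftrightarrow>
     (\<forall>x a. (x, a) \<in> G \<longrightarrow> x \<in> V \<and> a \<le> p x) \<and>
     (\<forall>x a y b. (x, a) \<in> G \<longrightarrow> (y, b) \<in> G \<longrightarrow> (x + y, a + b) \<in> G) \<and>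
     (\<forall>r x a. (x, a) \<in> G \<longrightarrow> (smul r x, r * a) \<in> G) \<and>
     (\<forall>x a b. (x, a) \<in> G \<longrightarrow> (x, b) \<in> G \<longrightarrow> a = b)"

lemma dominated_graphD:
  assumes "dominated_graph G"
  shows dominated_graph_mem: "\<And>x a. (x, a) \<in> G \<Longrightarrow> x \<in> V"
    and dominated_graph_le: "\<And>x a. (x, a) \<in> G \<Longrightarrow> a \<le> p x"
    and dominated_graph_add: "\<And>x a y b. (x, a) \<in> G \<Longrightarrow> (y, b) \<in> G \<Longrightarrow> (x + y, a + b) \<in> G"
    and dominated_graph_smul: "\<And>r x a. (x, a) \<in> G \<Longrightarrow> (smul r x, r * a) \<in> G"
    and dominated_graph_unique: "\<And>x a b. (x, a) \<in> G \<Longrightarrow> (x, b) \<in> G \<Longrightarrow> a = b"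
  using assms unfolding dominated_graph_def by blast+

lemma dominated_graph_zero:
  assumes "dominated_graph G" and "G \<noteq> {}"
  shows "(0, 0) \<in> G"
proof -
  obtain x a where "(x, a) \<in> G" using assms(2) by auto
  from dominated_graph_smul[OF assms(1) this, of 0] show ?thesis by simp
qed

lemma extension_value_exists:
  assumes G: "dominated_graph G" and "G \<noteq> {}" and x0: "x0 \<in> V"
  obtains c where "\<And>y a. (y, a) \<in> G \<Longrightarrow> a - p (y - x0) \<le> c"
    and "\<And>y a. (y, a) \<in> G \<Longrightarrow> c \<le> p (y + x0) - a"
proof -
  have sep: "a - p (y - x0) \<le> p (z + x0) - b" if "(y, a) \<in> G" "(z, b) \<in> G" for y a z b
  proof -
    have "a + b \<le> p ((y - x0) + (z + x0))"
      using dominated_graph_le[OF G dominated_graph_add[OF G that]] by simp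
    also have "\<dots> \<le> p (y - x0) + p (z + x0)"
      using subadditive[OF diff_mem add_mem] x0 dominated_graph_mem[OF G] that by blast
    finally show ?thesis by simp
  qed
  define L where "L = {a - p (y - x0) | y a. (y, a) \<in> G}"
  have G00: "(0, 0) \<in> G" by (rule dominated_graph_zero[OF G \<open>G \<noteq> {}\<close>])
  have "L \<noteq> {}" using G00 unfolding L_def by blast
  have "bdd_above L" unfolding L_def bdd_above_def using sep[OF _ G00] by auto
  show ?thesis
  proof (rule that)
    show "a - p (y - x0) \<le> Sup L" if "(y, a) \<in> G" for y a
      by (rule cSup_upper[OF _ \<open>bdd_above L\<close>]) (use that in \<open>auto simp: L_def\<close>)
    show "Sup L \<le> p (y + x0) - a" if "(y, a) \<in> G" for y a
      by (rule cSup_least[OF \<open>L \<noteq> {}\<close>]) (use that sep in \<open>auto simp: L_def\<close>)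
  qed
qed

lemma extension_dominated:
  assumes G: "dominated_graph G" and x0: "x0 \<in> V"
    and lower: "\<And>y a. (y, a) \<in> G \<Longrightarrow> a - p (y - x0) \<le> c"
    and upper: "\<And>y a. (y, a) \<in> G \<Longrightarrow> c \<le> p (y + x0) - a"
    and ya: "(y, a) \<in> G"
  shows "a + t * c \<le> p (y + smul t x0)"
proof -
  have yV: "y \<in> V" by (rule dominated_graph_mem[OF G ya])
  consider "t = 0" | "t > 0" | "t < 0" by linarith
  then show ?thesis
  proof cases
    case 1
    then show ?thesis using dominated_graph_le[OF G ya] by simp
  next
    case 2
    have "c \<le> p (smul (1/t) y + x0) - (1/t) * a"
      using upper[OF dominated_graph_smul[OF G ya]] .
    from mult_left_mono[OF this, of t] 2
    have "a + t * c \<le> t * p (smul (1/t) y + x0)"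
      by (simp add: right_diff_distrib)
    also have "\<dots> = p (smul t (smul (1/t) y + x0))"
      by (rule pos_homogeneous[symmetric, OF 2 add_mem[OF smul_mem[OF yV] x0]])
    also have "smul t (smul (1/t) y + x0) = y + smul t x0"
      using 2 by (simp add: smul_add_right smul_smul)
    finally show ?thesis .
  next
    case 3
    define s where "s = - t"
    have s: "s > 0" using 3 by (simp add: s_def)
    have "(1/s) * a - p (smul (1/s) y - x0) \<le> c"
      using lower[OF dominated_graph_smul[OF G ya]] .
    from mult_left_mono[OF this, of s] s
    have "a - s * p (smul (1/s) y - x0) \<le> s * c"
      by (simp add: right_diff_distrib)
    moreover have "s * p (smul (1/s) y - x0) = p (smul s (smul (1/s) y - x0))"
      by (rule pos_homogeneous[symmetric, OF s diff_mem[OF smul_mem[OF yV] x0]])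
    moreover have "smul s (smul (1/s) y - x0) = y + smul t x0"
      using s by (simp add: s_def smul_diff_right smul_smul smul_minus_left smul_minus_right)
    ultimately show ?thesis by (simp add: s_def)
  qed
qed

lemma extension_coordinates_unique:
  assumes G: "dominated_graph G" and x0_new: "\<And>a. (x0, a) \<notin> G"
    and ya: "(y, a) \<in> G" and yb: "(y', b) \<in> G" and eq: "y + smul t x0 = y' + smul u x0"
  shows "t = u" and "y = y'"
proof -
  show "t = u"
  proof (rule ccontr)
    assume "t \<noteq> u"
    have "smul (t - u) x0 = y' - y"
      using eq by (simp add: smul_diff_left algebra_simps)
    then have "x0 = smul (1 / (t - u)) (y' - y)"
      using \<open>t \<noteq> u\<close> smul_smul[of "1 / (t - u)" "t - u" x0] by simp
    moreover have "(y' - y, b - a) \<in> G"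
      using dominated_graph_add[OF G yb dominated_graph_smul[OF G ya, of "- 1"]]
      by (simp add: smul_minus_left)
    ultimately show False using dominated_graph_smul[OF G] x0_new by metis
  qed
  with eq show "y = y'" by simp
qed

lemma dominated_graph_extend:
  assumes G: "dominated_graph G" and "G \<noteq> {}" and x0: "x0 \<in> V" and x0_new: "\<And>a. (x0, a) \<notin> G"
  shows "\<exists>G'. dominated_graph G' \<and> G \<subset> G'"
proof -
  obtain c where lower: "\<And>y a. (y, a) \<in> G \<Longrightarrow> a - p (y - x0) \<le> c"
    and upper: "\<And>y a. (y, a) \<in> G \<Longrightarrow> c \<le> p (y + x0) - a"
    using extension_value_exists[OF assms(1-3)] by blast
  define G' where "G' = {(y + smul t x0, a + t * c) | y a t. (y, a) \<in> G}"
  have G'I: "(y + smul t x0, a + t * c) \<in> G'" if "(y, a) \<in> G" for y a t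
    using that unfolding G'_def by blast
  have G00: "(0, 0) \<in> G" by (rule dominated_graph_zero[OF G \<open>G \<noteq> {}\<close>])
  have "dominated_graph G'"
    unfolding dominated_graph_def
  proof (intro conjI allI impI)
    fix x a assume "(x, a) \<in> G'"
    then obtain y b t where xa: "x = y + smul t x0" "a = b + t * c" and yb: "(y, b) \<in> G"
      unfolding G'_def by blast
    show "x \<in> V" unfolding xa by (rule add_mem[OF dominated_graph_mem[OF G yb] smul_mem[OF x0]])
    show "a \<le> p x" unfolding xa by (rule extension_dominated[OF G x0 lower upper yb])
  next
    fix x a y b assume "(x, a) \<in> G'" "(y, b) \<in> G'"
    then obtain x' a' t y' b' u where "x = x' + smul t x0" "a = a' + t * c" "(x', a') \<in> G"
      "y = y' + smul u x0" "b = b' + u * c" "(y', b') \<in> G"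
      unfolding G'_def by blast
    moreover from this have "x + y = (x' + y') + smul (t + u) x0" "a + b = (a' + b') + (t + u) * c"
      by (simp_all add: smul_add_left algebra_simps)
    ultimately show "(x + y, a + b) \<in> G'" using G'I dominated_graph_add[OF G] by metis
  next
    fix r x a assume "(x, a) \<in> G'"
    then obtain x' a' t where "x = x' + smul t x0" "a = a' + t * c" "(x', a') \<in> G"
      unfolding G'_def by blast
    moreover from this have "smul r x = smul r x' + smul (r * t) x0" "r * a = r * a' + (r * t) * c"
      by (simp_all add: smul_add_right smul_smul algebra_simps)
    ultimately show "(smul r x, r * a) \<in> G'" using G'I dominated_graph_smul[OF G] by metis
  next
    fix x a b assume "(x, a) \<in> G'" "(x, b) \<in> G'"
    then obtain y a' t y' b' u where x: "y + smul t x0 = y' + smul u x0"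
      and ab: "a = a' + t * c" "b = b' + u * c" and ya: "(y, a') \<in> G" and yb: "(y', b') \<in> G"
      unfolding G'_def by auto
    with extension_coordinates_unique[OF G x0_new ya yb x] dominated_graph_unique[OF G]
    show "a = b" by auto
  qed
  moreover have "G \<subseteq> G'" using G'I[where t = 0] by auto
  moreover have "(x0, c) \<in> G'" using G'I[OF G00, of 1] by simp
  ultimately show ?thesis using x0_new by blast
qed

lemma dominated_graph_Union:
  assumes C: "chain\<^sub>\<subseteq> C" and dom: "\<And>G. G \<in> C \<Longrightarrow> dominated_graph G"
  shows "dominated_graph (\<Union>C)"
proof -
  have common: "\<exists>Z\<in>C. u \<in> Z \<and> v \<in> Z" if uv: "u \<in> \<Union>C" "v \<in> \<Union>C" for u v
  proof -
    obtain X Y where "X \<in> C" "u \<in> X" "Y \<in> C" "v \<in> Y" using uv by blast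
    moreover have "X \<subseteq> Y \<or> Y \<subseteq> X" using C \<open>X \<in> C\<close> \<open>Y \<in> C\<close> unfolding chain_subset_def by blast
    ultimately show ?thesis by blast
  qed
  show ?thesis
    unfolding dominated_graph_def
  proof (intro conjI allI impI)
    fix x a assume "(x, a) \<in> \<Union>C"
    then obtain X where X: "X \<in> C" "(x, a) \<in> X" by blast
    show "x \<in> V" by (rule dominated_graph_mem[OF dom[OF X(1)] X(2)])
    show "a \<le> p x" by (rule dominated_graph_le[OF dom[OF X(1)] X(2)])
  next
    fix x a y b assume "(x, a) \<in> \<Union>C" "(y, b) \<in> \<Union>C"
    then obtain Z where Z: "Z \<in> C" "(x, a) \<in> Z" "(y, b) \<in> Z" using common by meson
    show "(x + y, a + b) \<in> \<Union>C" using dominated_graph_add[OF dom[OF Z(1)] Z(2,3)] Z(1) by blast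
  next
    fix r x a assume "(x, a) \<in> \<Union>C"
    then obtain X where X: "X \<in> C" "(x, a) \<in> X" by blast
    show "(smul r x, r * a) \<in> \<Union>C" using dominated_graph_smul[OF dom[OF X(1)] X(2)] X(1) by blast
  next
    fix x a b assume "(x, a) \<in> \<Union>C" "(x, b) \<in> \<Union>C"
    then obtain Z where Z: "Z \<in> C" "(x, a) \<in> Z" "(x, b) \<in> Z" using common by meson
    show "a = b" by (rule dominated_graph_unique[OF dom[OF Z(1)] Z(2,3)])
  qed
qed

theorem hahn_banach:
  assumes G0: "dominated_graph G0" and "G0 \<noteq> {}"
  obtains h where "\<And>x a. (x, a) \<in> G0 \<Longrightarrow> h x = a"
    and "\<And>x. x \<in> V \<Longrightarrow> h x \<le> p x"
    and "\<And>x y. x \<in> V \<Longrightarrow> y \<in> V \<Longrightarrow> h (x + y) = h x + h y"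
    and "\<And>r x. x \<in> V \<Longrightarrow> h (smul r x) = r * h x"
proof -
  define A where "A = {G. dominated_graph G \<and> G0 \<subseteq> G}"
  have "\<exists>U\<in>A. \<forall>X\<in>C. X \<subseteq> U" if "C \<in> chains A" for C
  proof (cases "C = {}")
    case True
    then show ?thesis using G0 unfolding A_def by auto
  next
    case False
    have "C \<subseteq> A" "chain\<^sub>\<subseteq> C" using that unfolding chains_def by auto
    then have "dominated_graph (\<Union>C)" and "G0 \<subseteq> \<Union>C"
      using dominated_graph_Union[of C] False unfolding A_def by auto
    then show ?thesis unfolding A_def by blast
  qed
  from Zorn_Lemma2[OF ballI[OF this]] obtain M
    where "M \<in> A" and M_max: "\<forall>X\<in>A. M \<subseteq> X \<longrightarrow> X = M" by blast
  then have M: "dominated_graph M" and G0M: "G0 \<subseteq> M" unfolding A_def by auto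
  have total: "\<exists>a. (x, a) \<in> M" if x: "x \<in> V" for x
  proof (rule ccontr)
    assume "\<nexists>a. (x, a) \<in> M"
    moreover have "M \<noteq> {}" using G0M \<open>G0 \<noteq> {}\<close> by blast
    ultimately obtain G' where "dominated_graph G'" "M \<subset> G'"
      using dominated_graph_extend[OF M _ x] by blast
    with M_max G0M show False unfolding A_def by blast
  qed
  define h where "h x = (THE a. (x, a) \<in> M)" for x
  have h_eq: "h x = a" if "(x, a) \<in> M" for x a
    unfolding h_def using that dominated_graph_unique[OF M _ that] by (rule the_equality)
  have h_mem: "(x, h x) \<in> M" if "x \<in> V" for x
    using total[OF that] h_eq by blast
  show ?thesis
  proof
    show "h x = a" if "(x, a) \<in> G0" for x a using that G0M h_eq by blast
    show "h x \<le> p x" if "x \<in> V" for x using dominated_graph_le[OF M h_mem[OF that]] .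
    show "h (x + y) = h x + h y" if "x \<in> V" "y \<in> V" for x y
      using h_eq[OF dominated_graph_add[OF M h_mem[OF that(1)] h_mem[OF that(2)]]] .
    show "h (smul r x) = r * h x" if "x \<in> V" for r x
      using h_eq[OF dominated_graph_smul[OF M h_mem[OF that]]] .
  qed
qed

end

section \<open>Complex Hilbert spaces\<close>

locale hilbert =
  fixes sc :: "complex \<Rightarrow> 'h::ab_group_add \<Rightarrow> 'h" and ip :: "'h \<Rightarrow> 'h \<Rightarrow> complex"
  assumes hilbert: "hilbert_space sc ip"
begin

lemma sc_add_right: "sc a (x + y) = sc a x + sc a y"
  using hilbert unfolding hilbert_space_def by metis

lemma sc_add_left: "sc (a + b) x = sc a x + sc b x"
  using hilbert unfolding hilbert_space_def by metis

lemma sc_sc: "sc a (sc b x) = sc (a * b) x"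
  using hilbert unfolding hilbert_space_def by metis

lemma sc_one [simp]: "sc 1 x = x"
  using hilbert unfolding hilbert_space_def by metis

lemma ip_add_left: "ip (x + y) z = ip x z + ip y z"
  using hilbert unfolding hilbert_space_def by metis

lemma ip_sc_left: "ip (sc a x) y = a * ip x y"
  using hilbert unfolding hilbert_space_def by metis

lemma ip_commute: "ip y x = cnj (ip x y)"
  using hilbert unfolding hilbert_space_def by metis

lemma ip_self_Re_nonneg: "0 \<le> Re (ip x x)"
  using hilbert unfolding hilbert_space_def by metis

lemma ip_self_eq_0: "ip x x = 0 \<Longrightarrow> x = 0"
  using hilbert unfolding hilbert_space_def by metis

lemma sc_zero_left [simp]: "sc 0 x = 0"
  using sc_add_left[of 0 0 x] by simp

lemma sc_zero_right [simp]: "sc a 0 = 0"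
  using sc_add_right[of a 0 0] by simp

lemma sc_minus_left: "sc (- a) x = - sc a x"
  using minus_unique[of "sc a x" "sc (- a) x"] sc_add_left[of a "- a" x] by simp

lemma sc_minus_right: "sc a (- x) = - sc a x"
  using minus_unique[of "sc a x" "sc a (- x)"] sc_add_right[of a x "- x"] by simp

lemma sc_diff_right: "sc a (x - y) = sc a x - sc a y"
  using sc_add_right[of a x "- y"] sc_minus_right by simp

lemma sc_diff_left: "sc (a - b) x = sc a x - sc b x"
  using sc_add_left[of a "- b" x] sc_minus_left by simp

lemma sc_minus_one [simp]: "sc (- 1) x = - x"
  using sc_minus_left[of 1 x] by simp

lemma ip_add_right: "ip x (y + z) = ip x y + ip x z"
  by (subst (1 2 3) ip_commute) (simp add: ip_add_left)

lemma ip_sc_right: "ip x (sc a y) = cnj a * ip x y"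
  by (subst (1 2) ip_commute) (simp add: ip_sc_left)

lemma ip_zero_left [simp]: "ip 0 y = 0"
  using ip_add_left[of 0 0 y] by simp

lemma ip_zero_right [simp]: "ip x 0 = 0"
  using ip_add_right[of x 0 0] by simp

lemma ip_diff_left: "ip (x - y) z = ip x z - ip y z"
  using ip_add_left[of x "- y" z] ip_sc_left[of "- 1" y z] by simp

lemma ip_diff_right: "ip x (y - z) = ip x y - ip x z"
  using ip_add_right[of x y "- z"] ip_sc_right[of x "- 1" z] by simp

lemma ip_self_real: "ip x x = complex_of_real (Re (ip x x))"
  using ip_commute[of x x] by (simp add: complex_eq_iff)

lemma ip_self_Re_eq_0_iff: "Re (ip x x) = 0 \<longleftrightarrow> x = 0"
  using ip_self_real[of x] ip_self_eq_0[of x] by auto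

lemma cauchy_schwarz: "(cmod (ip x y))\<^sup>2 \<le> Re (ip x x) * Re (ip y y)"
proof (cases "y = 0")
  case True
  then show ?thesis by simp
next
  case False
  define r where "r = Re (ip y y)"
  have r: "r > 0"
    using False ip_self_Re_nonneg[of y] ip_self_Re_eq_0_iff[of y] unfolding r_def by linarith
  define w where "w = ip x y"
  define t where "t = w / complex_of_real r"
  have wc: "w * cnj w = complex_of_real ((cmod w)\<^sup>2)" by (rule complex_norm_square[symmetric])
  have "ip (x - sc t y) (x - sc t y) = ip x x - cnj t * w - t * cnj w + t * cnj t * complex_of_real r"
    using ip_self_real[of y] ip_commute[of x y]
    by (simp add: ip_diff_left ip_diff_right ip_sc_left ip_sc_right r_def w_def algebra_simps)
  also have "\<dots> = ip x x - complex_of_real ((cmod w)\<^sup>2 / r)"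
    using r wc unfolding t_def by (simp add: mult.commute)
  finally have "0 \<le> Re (ip x x) - (cmod w)\<^sup>2 / r"
    using ip_self_Re_nonneg[of "x - sc t y"] by simp
  then show ?thesis using r unfolding w_def r_def by (simp add: field_simps)
qed

lemma hnorm_square: "(hnorm ip x)\<^sup>2 = Re (ip x x)"
  unfolding hnorm_def by (rule real_sqrt_pow2[OF ip_self_Re_nonneg])

lemma hnorm_nonneg: "0 \<le> hnorm ip x"
  unfolding hnorm_def using ip_self_Re_nonneg by simp

lemma complete:
  assumes "\<forall>e>0. \<exists>N. \<forall>m\<ge>N. \<forall>n\<ge>N. hnorm ip (X m - X n) < e"
  obtains L where "(\<lambda>n. hnorm ip (X n - L)) \<longlonglongrightarrow> 0"
proof -
  from hilbert assms obtain L where "\<forall>e>0. \<exists>N. \<forall>n\<ge>N. hnorm ip (X n - L) < e"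
    unfolding hilbert_space_def by metis
  then have "(\<lambda>n. hnorm ip (X n - L)) \<longlonglongrightarrow> 0" by (simp add: LIMSEQ_iff hnorm_nonneg)
  then show ?thesis by (rule that)
qed

lemma hnorm_eq_0_iff: "hnorm ip x = 0 \<longleftrightarrow> x = 0"
  unfolding hnorm_def using ip_self_Re_nonneg[of x] ip_self_Re_eq_0_iff[of x] by simp

lemma hnorm_zero [simp]: "hnorm ip 0 = 0"
  using hnorm_eq_0_iff by simp

lemma norm_ip_le: "cmod (ip x y) \<le> hnorm ip x * hnorm ip y"
proof -
  have "(cmod (ip x y))\<^sup>2 \<le> (hnorm ip x * hnorm ip y)\<^sup>2"
    using cauchy_schwarz[of x y] by (simp add: power_mult_distrib hnorm_square)
  then show ?thesis using hnorm_nonneg by (meson mult_nonneg_nonneg power2_le_imp_le)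
qed

lemma hnorm_sc: "hnorm ip (sc a x) = cmod a * hnorm ip x"
proof -
  have "ip (sc a x) (sc a x) = (a * cnj a) * ip x x" by (simp add: ip_sc_left ip_sc_right)
  also have "\<dots> = complex_of_real ((cmod a)\<^sup>2 * Re (ip x x))"
    by (subst ip_self_real) (simp add: complex_norm_square[symmetric])
  finally show ?thesis unfolding hnorm_def by (simp add: real_sqrt_mult)
qed

lemma hnorm_minus_commute: "hnorm ip (x - y) = hnorm ip (y - x)"
  using hnorm_sc[of "- 1" "x - y"] by simp

lemma hnorm_triangle: "hnorm ip (x + y) \<le> hnorm ip x + hnorm ip y"
proof -
  have "ip (x + y) (x + y) = ip x x + ip y y + (ip x y + cnj (ip x y))"
    using ip_commute[of x y] by (simp add: ip_add_left ip_add_right)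
  then have "Re (ip (x + y) (x + y)) = Re (ip x x) + Re (ip y y) + 2 * Re (ip x y)" by simp
  also have "\<dots> \<le> Re (ip x x) + Re (ip y y) + 2 * (hnorm ip x * hnorm ip y)"
    using norm_ip_le[of x y] complex_Re_le_cmod[of "ip x y"] by linarith
  also have "\<dots> = (hnorm ip x + hnorm ip y)\<^sup>2" by (simp add: power2_sum hnorm_square)
  finally have "(hnorm ip (x + y))\<^sup>2 \<le> (hnorm ip x + hnorm ip y)\<^sup>2" by (simp add: hnorm_square)
  then show ?thesis using hnorm_nonneg by (meson add_nonneg_nonneg power2_le_imp_le)
qed

lemma parallelogram:
  "Re (ip (x - y) (x - y)) + Re (ip (x + y) (x + y)) = 2 * Re (ip x x) + 2 * Re (ip y y)"
proof -
  have "ip (x - y) (x - y) + ip (x + y) (x + y) = 2 * ip x x + 2 * ip y y"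
    by (simp add: ip_add_left ip_add_right ip_diff_left ip_diff_right)
  then show ?thesis by (metis plus_complex.sel(1) Re_complex_of_real mult_2)
qed

lemma bounded_op_add: "bounded_op sc ip T \<Longrightarrow> T (x + y) = T x + T y"
  unfolding bounded_op_def by blast

lemma bounded_op_sc: "bounded_op sc ip T \<Longrightarrow> T (sc a x) = sc a (T x)"
  unfolding bounded_op_def by blast

lemma bounded_op_zero: "bounded_op sc ip T \<Longrightarrow> T 0 = 0"
  using bounded_op_sc[of T 0 0] by simp

lemma bounded_op_bdd_above:
  assumes "bounded_op sc ip T"
  shows "bdd_above ((\<lambda>x. hnorm ip (T x)) ` {x. hnorm ip x \<le> 1})"
proof -
  obtain C where C: "\<And>x. hnorm ip (T x) \<le> C * hnorm ip x"
    using assms unfolding bounded_op_def by blast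
  have "hnorm ip (T x) \<le> max C 0" if "hnorm ip x \<le> 1" for x
  proof -
    have "C * hnorm ip x \<le> max C 0 * hnorm ip x" using hnorm_nonneg by (simp add: mult_right_mono)
    also have "\<dots> \<le> max C 0" using that hnorm_nonneg[of x] by (simp add: mult_left_le)
    finally show ?thesis using C[of x] by linarith
  qed
  then show ?thesis unfolding bdd_above_def by blast
qed

lemma opnorm_upper: "bounded_op sc ip T \<Longrightarrow> hnorm ip x \<le> 1 \<Longrightarrow> hnorm ip (T x) \<le> opnorm ip T"
  unfolding opnorm_def by (rule cSup_upper[OF _ bounded_op_bdd_above]) auto

lemma opnorm_nonneg: "bounded_op sc ip T \<Longrightarrow> 0 \<le> opnorm ip T"
  using opnorm_upper[of T 0] hnorm_nonneg[of "T 0"] by simp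

lemma opnorm_least: "(\<And>x. hnorm ip x \<le> 1 \<Longrightarrow> hnorm ip (T x) \<le> C) \<Longrightarrow> opnorm ip T \<le> C"
  unfolding opnorm_def by (rule cSup_least) (auto intro: exI[of _ 0])

lemma hnorm_apply_le:
  assumes T: "bounded_op sc ip T"
  shows "hnorm ip (T x) \<le> opnorm ip T * hnorm ip x"
proof (cases "x = 0")
  case True
  then show ?thesis using bounded_op_zero[OF T] by simp
next
  case False
  define n where "n = hnorm ip x"
  have n: "n > 0" using False hnorm_eq_0_iff hnorm_nonneg unfolding n_def by (metis less_eq_real_def)
  have c: "cmod (complex_of_real (1 / n)) = 1 / n" using n by (simp only: norm_of_real) simp
  have "hnorm ip (sc (complex_of_real (1 / n)) x) = 1" using n by (simp only: hnorm_sc c) (simp add: n_def)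
  then have "hnorm ip (T (sc (complex_of_real (1 / n)) x)) \<le> opnorm ip T" by (simp add: opnorm_upper[OF T])
  then have "(1 / n) * hnorm ip (T x) \<le> opnorm ip T" by (simp only: bounded_op_sc[OF T] hnorm_sc c)
  then show ?thesis using n unfolding n_def[symmetric] by (simp add: field_simps)
qed

lemma opnorm_add_le:
  assumes T: "bounded_op sc ip T" and U: "bounded_op sc ip U"
  shows "opnorm ip (T + U) \<le> opnorm ip T + opnorm ip U"
proof (rule opnorm_least)
  fix x assume x: "hnorm ip x \<le> 1"
  have "hnorm ip (T x + U x) \<le> hnorm ip (T x) + hnorm ip (U x)" by (rule hnorm_triangle)
  also have "\<dots> \<le> (opnorm ip T + opnorm ip U) * hnorm ip x"
    using hnorm_apply_le[OF T, of x] hnorm_apply_le[OF U, of x] by (simp add: algebra_simps)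
  also have "\<dots> \<le> opnorm ip T + opnorm ip U"
    using mult_left_mono[OF x] opnorm_nonneg[OF T] opnorm_nonneg[OF U] by simp
  finally show "hnorm ip ((T + U) x) \<le> opnorm ip T + opnorm ip U" by simp
qed

lemma opnorm_sc_le:
  assumes T: "bounded_op sc ip T"
  shows "opnorm ip (\<lambda>x. sc c (T x)) \<le> cmod c * opnorm ip T"
proof (rule opnorm_least)
  fix x assume x: "hnorm ip x \<le> 1"
  have "hnorm ip (sc c (T x)) = cmod c * hnorm ip (T x)" by (rule hnorm_sc)
  also have "\<dots> \<le> cmod c * (opnorm ip T * hnorm ip x)"
    by (rule mult_left_mono[OF hnorm_apply_le[OF T]]) simp
  also have "\<dots> \<le> cmod c * opnorm ip T"
    using mult_left_mono[OF x opnorm_nonneg[OF T]] by (simp add: mult_left_mono)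
  finally show "hnorm ip (sc c (T x)) \<le> cmod c * opnorm ip T" .
qed

lemma opnorm_sc:
  assumes T: "bounded_op sc ip T" and cT: "bounded_op sc ip (\<lambda>x. sc c (T x))" and c: "c \<noteq> 0"
  shows "opnorm ip (\<lambda>x. sc c (T x)) = cmod c * opnorm ip T"
proof (rule antisym)
  show "opnorm ip (\<lambda>x. sc c (T x)) \<le> cmod c * opnorm ip T" by (rule opnorm_sc_le[OF T])
  have "(\<lambda>x. sc (1 / c) (sc c (T x))) = T" using c by (simp add: sc_sc)
  then have "opnorm ip T \<le> cmod (1 / c) * opnorm ip (\<lambda>x. sc c (T x))"
    using opnorm_sc_le[OF cT, of "1 / c"] by simp
  from mult_left_mono[OF this, of "cmod c"] c
  show "cmod c * opnorm ip T \<le> opnorm ip (\<lambda>x. sc c (T x))" by (simp add: norm_divide)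
qed

lemma hnorm_less_if_square_less: "0 < e \<Longrightarrow> Re (ip x x) < e\<^sup>2 \<Longrightarrow> hnorm ip x < e"
  using power2_less_imp_less[of "hnorm ip x" e] by (simp add: hnorm_square)

lemma minimizing_sequence_Cauchy:
  assumes midpoint: "\<And>x y. x \<in> H \<Longrightarrow> y \<in> H \<Longrightarrow> sc (1/2) (x + y) \<in> H"
    and lower: "\<And>x. x \<in> H \<Longrightarrow> d \<le> Re (ip x x)"
    and X_mem: "\<And>n. X n \<in> H" and X_less: "\<And>n. Re (ip (X n) (X n)) < d + 1 / Suc n"
  shows "\<forall>e>0. \<exists>N. \<forall>m\<ge>N. \<forall>n\<ge>N. hnorm ip (X m - X n) < e"
proof (intro allI impI)
  fix e :: real assume e: "e > 0"
  have sum: "4 * d \<le> Re (ip (X m + X n) (X m + X n))" for m n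
  proof -
    have "X m + X n = sc 2 (sc (1/2) (X m + X n))" by (simp add: sc_sc)
    then have "hnorm ip (X m + X n) = 2 * hnorm ip (sc (1/2) (X m + X n))" by (metis hnorm_sc norm_numeral)
    then have "Re (ip (X m + X n) (X m + X n)) = 4 * Re (ip (sc (1/2) (X m + X n)) (sc (1/2) (X m + X n)))"
      by (simp add: hnorm_square[symmetric] power_mult_distrib)
    then show ?thesis using lower[OF midpoint[OF X_mem X_mem]] by simp
  qed
  have diff: "Re (ip (X m - X n) (X m - X n)) < 2 / Suc m + 2 / Suc n" for m n
    using parallelogram[of "X m" "X n"] sum[of m n] X_less[of m] X_less[of n] by simp
  obtain N :: nat where N: "4 / e\<^sup>2 < real N" using reals_Archimedean2 by blast
  have N4: "4 / Suc N < e\<^sup>2"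
  proof -
    have "4 < e\<^sup>2 * real N" using N e by (simp add: field_simps)
    also have "\<dots> < e\<^sup>2 * Suc N" using e by simp
    finally show ?thesis by (simp add: field_simps)
  qed
  have "hnorm ip (X m - X n) < e" if "N \<le> m" "N \<le> n" for m n
  proof (rule hnorm_less_if_square_less[OF e])
    have "2 / Suc m \<le> 2 / Suc N" "2 / Suc n \<le> 2 / Suc N" using that by (simp_all add: frac_le)
    then show "Re (ip (X m - X n) (X m - X n)) < e\<^sup>2" using diff[of m n] N4 by simp
  qed
  then show "\<exists>N. \<forall>m\<ge>N. \<forall>n\<ge>N. hnorm ip (X m - X n) < e" by blast
qed

lemma bounded_functional_limit:
  fixes f :: "'h \<Rightarrow> complex"
  assumes add: "\<And>x y. f (x + y) = f x + f y" and bound: "\<And>x. cmod (f x) \<le> C * hnorm ip x"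
    and lim: "(\<lambda>n. hnorm ip (X n - L)) \<longlonglongrightarrow> 0" and const: "\<And>n. f (X n) = c"
  shows "f L = c"
proof -
  have "cmod (f L - c) \<le> 0"
  proof (rule LIMSEQ_le_const)
    show "(\<lambda>n. C * hnorm ip (X n - L)) \<longlonglongrightarrow> 0" using tendsto_mult_right_zero[OF lim] .
    have "cmod (f L - c) = cmod (f (X n - L))" for n
      using add[of "X n - L" L] const[of n] by (simp add: norm_minus_commute)
    then show "\<exists>N. \<forall>n\<ge>N. cmod (f L - c) \<le> C * hnorm ip (X n - L)" using bound by metis
  qed
  then show ?thesis by simp
qed

lemma hnorm_limit_le:
  assumes "(\<lambda>n. hnorm ip (X n - L)) \<longlonglongrightarrow> 0" and "(\<lambda>n. hnorm ip (X n)) \<longlonglongrightarrow> l"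
  shows "hnorm ip L \<le> l"
proof (rule LIMSEQ_le_const)
  show "(\<lambda>n. hnorm ip (X n) + hnorm ip (X n - L)) \<longlonglongrightarrow> l"
    using tendsto_add[OF assms(2,1)] by simp
  have "hnorm ip L \<le> hnorm ip (X n) + hnorm ip (X n - L)" for n
    using hnorm_triangle[of "X n" "L - X n"] hnorm_minus_commute[of L "X n"] by simp
  then show "\<exists>N. \<forall>n\<ge>N. hnorm ip L \<le> hnorm ip (X n) + hnorm ip (X n - L)" by blast
qed

lemma min_norm_on_hyperplane:
  fixes f :: "'h \<Rightarrow> complex"
  assumes add: "\<And>x y. f (x + y) = f x + f y" and scale: "\<And>a x. f (sc a x) = a * f x"
    and bound: "\<And>x. cmod (f x) \<le> C * hnorm ip x" and u: "f u = 1"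
  obtains L where "f L = 1" and "\<And>x. f x = 1 \<Longrightarrow> Re (ip L L) \<le> Re (ip x x)"
proof -
  define Q where "Q = (\<lambda>x. Re (ip x x)) ` {x. f x = 1}"
  define d where "d = Inf Q"
  have "Q \<noteq> {}" using u unfolding Q_def by blast
  have "bdd_below Q" unfolding bdd_below_def Q_def using ip_self_Re_nonneg by blast
  have d_le: "d \<le> Re (ip x x)" if "f x = 1" for x
    unfolding d_def by (rule cInf_lower[OF _ \<open>bdd_below Q\<close>]) (use that Q_def in blast)
  have "0 \<le> d"
    unfolding d_def by (rule cInf_greatest[OF \<open>Q \<noteq> {}\<close>]) (auto simp: Q_def ip_self_Re_nonneg)
  have "\<exists>x. f x = 1 \<and> Re (ip x x) < d + 1 / Suc n" for n :: nat
    using cInf_lessD[OF \<open>Q \<noteq> {}\<close>, of "d + 1 / Suc n"] unfolding d_def Q_def by auto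
  then obtain X where X_mem: "\<And>n. f (X n) = 1" and X_less: "\<And>n. Re (ip (X n) (X n)) < d + 1 / Suc n"
    by metis
  have "\<forall>e>0. \<exists>N. \<forall>m\<ge>N. \<forall>n\<ge>N. hnorm ip (X m - X n) < e"
    using minimizing_sequence_Cauchy[of "{x. f x = 1}" d X] X_mem X_less by (simp add: add scale d_le)
  then obtain L where L: "(\<lambda>n. hnorm ip (X n - L)) \<longlonglongrightarrow> 0" by (rule complete)
  have "(\<lambda>n. Re (ip (X n) (X n))) \<longlonglongrightarrow> d"
  proof (rule real_tendsto_sandwich)
    show "\<forall>\<^sub>F n in sequentially. d \<le> Re (ip (X n) (X n))"
      using d_le X_mem by (intro always_eventually allI) blast
    show "\<forall>\<^sub>F n in sequentially. Re (ip (X n) (X n)) \<le> d + 1 / Suc n"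
      using X_less less_imp_le by (intro always_eventually allI) blast
    show "(\<lambda>n. d + 1 / Suc n) \<longlonglongrightarrow> d"
      using tendsto_add[OF tendsto_const LIMSEQ_inverse_real_of_nat] by (simp add: inverse_eq_divide)
  qed simp
  then have "(\<lambda>n. hnorm ip (X n)) \<longlonglongrightarrow> sqrt d"
    unfolding hnorm_def by (rule tendsto_real_sqrt)
  with L have "hnorm ip L \<le> sqrt d" by (rule hnorm_limit_le)
  then have "Re (ip L L) \<le> d"
    using hnorm_nonneg[of L] power_mono[of "hnorm ip L" "sqrt d" 2] \<open>0 \<le> d\<close> by (simp add: hnorm_square)
  moreover have "f L = 1" by (rule bounded_functional_limit[OF add bound L X_mem])
  ultimately show ?thesis using that d_le by fastforce
qed

lemma ip_eq_0_if_min_norm_on_line: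
  assumes min: "\<And>t. Re (ip L L) \<le> Re (ip (L + sc t n) (L + sc t n))"
  shows "ip L n = 0"
proof -
  define w where "w = ip L n"
  define r where "r = Re (ip n n)"
  define s where "s = 1 / (r + 1)"
  have "r \<ge> 0" unfolding r_def by (rule ip_self_Re_nonneg)
  then have s: "s > 0" "s * r < 1" unfolding s_def by (simp_all add: field_simps)
  define t where "t = - (complex_of_real s * w)"
  have "ip (L + sc t n) (L + sc t n) = ip L L + (cnj t * w + t * cnj w + t * cnj t * complex_of_real r)"
    using ip_commute[of L n] ip_self_real[of n]
    by (simp add: ip_add_left ip_add_right ip_sc_left ip_sc_right w_def r_def algebra_simps)
  also have "cnj t * w + t * cnj w + t * cnj t * complex_of_real r
      = complex_of_real ((cmod w)\<^sup>2 * (s * (s * r) - 2 * s))"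
    using cmod_power2[of w] unfolding t_def by (simp add: complex_eq_iff power2_eq_square algebra_simps)
  finally have "0 \<le> (cmod w)\<^sup>2 * (s * (s * r) - 2 * s)" using min[of t] by simp
  moreover have "s * (s * r) - 2 * s < 0" using s by (simp add: mult_strict_left_mono[of _ 1 s])
  ultimately have "(cmod w)\<^sup>2 \<le> 0" by (simp add: zero_le_mult_iff)
  then show ?thesis unfolding w_def by simp
qed

theorem riesz_representation:
  fixes f :: "'h \<Rightarrow> complex"
  assumes add: "\<And>x y. f (x + y) = f x + f y" and scale: "\<And>a x. f (sc a x) = a * f x"
    and bound: "\<And>x. cmod (f x) \<le> C * hnorm ip x"
  obtains y where "\<And>x. f x = ip x y"
proof (cases "\<forall>x. f x = 0")
  case True
  then show ?thesis using that[of 0] by simp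
next
  case False
  then obtain u where "f u \<noteq> 0" by blast
  then have "f (sc (1 / f u) u) = 1" by (simp add: scale)
  then obtain L where fL: "f L = 1" and L_min: "\<And>x. f x = 1 \<Longrightarrow> Re (ip L L) \<le> Re (ip x x)"
    using min_norm_on_hyperplane[OF add scale bound] by blast
  have orth: "ip L n = 0" if "f n = 0" for n
    using fL that by (intro ip_eq_0_if_min_norm_on_line L_min) (simp add: add scale)
  have "L \<noteq> 0" using fL scale[of 0 0] by auto
  define r where "r = Re (ip L L)"
  have r: "r > 0" using \<open>L \<noteq> 0\<close> ip_self_Re_nonneg[of L] ip_self_Re_eq_0_iff[of L] r_def by linarith
  have "ip x L = f x * complex_of_real r" for x
  proof -
    have "f (x - sc (f x) L) = 0" using fL add[of "x - sc (f x) L" "sc (f x) L"] by (simp add: scale)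
    then have "ip (x - sc (f x) L) L = 0" using orth ip_commute[of L "x - sc (f x) L"] by simp
    then show ?thesis using ip_self_real[of L] by (simp add: ip_diff_left ip_sc_left r_def)
  qed
  then have "f x = ip x (sc (complex_of_real (1 / r)) L)" for x
    using r by (simp add: ip_sc_right)
  then show ?thesis by (rule that)
qed

lemma adjoint_exists:
  assumes T: "bounded_op sc ip T"
  shows "\<exists>A. \<forall>x y. ip (T x) y = ip x (A y)"
proof -
  have "\<exists>z. \<forall>x. ip (T x) y = ip x z" for y
  proof -
    obtain z where "\<And>x. ip (T x) y = ip x z"
    proof (rule riesz_representation[of "\<lambda>x. ip (T x) y" "opnorm ip T * hnorm ip y"])
      show "ip (T (x + x')) y = ip (T x) y + ip (T x') y" for x x'
        by (simp add: bounded_op_add[OF T] ip_add_left)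
      show "ip (T (sc a x)) y = a * ip (T x) y" for a x
        by (simp add: bounded_op_sc[OF T] ip_sc_left)
      show "cmod (ip (T x) y) \<le> opnorm ip T * hnorm ip y * hnorm ip x" for x
        using norm_ip_le[of "T x" y] mult_right_mono[OF hnorm_apply_le[OF T, of x] hnorm_nonneg[of y]]
        by (simp add: algebra_simps)
    qed (rule that)
    then show ?thesis by blast
  qed
  then have "\<exists>A. \<forall>y x. ip (T x) y = ip x (A y)" by (rule choice[OF allI])
  then show ?thesis by blast
qed

lemma adj_eqI:
  assumes A: "\<forall>x y. ip (T x) y = ip x (A y)"
  shows "adj ip T = A"
  unfolding adj_def
proof (rule the_equality)
  show "\<forall>x y. ip (T x) y = ip x (A y)" by (rule A)
  fix B assume B: "\<forall>x y. ip (T x) y = ip x (B y)"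
  show "B = A"
  proof
    fix y
    have "ip x (B y - A y) = 0" for x using A B by (simp add: ip_diff_right)
    then show "B y = A y" using ip_self_eq_0[of "B y - A y"] by simp
  qed
qed

lemma ip_adj:
  assumes "bounded_op sc ip T"
  shows "ip (T x) y = ip x (adj ip T y)"
proof -
  obtain A where A: "\<forall>x y. ip (T x) y = ip x (A y)" using adjoint_exists[OF assms] by blast
  then show ?thesis using adj_eqI[OF A] by simp
qed

lemma opnorm_adjoint_le:
  assumes T: "bounded_op sc ip T" and A: "\<forall>x y. ip (T x) y = ip x (A y)"
  shows "opnorm ip A \<le> opnorm ip T"
proof (rule opnorm_least)
  fix y assume y: "hnorm ip y \<le> 1"
  have "hnorm ip (A y) * hnorm ip (A y) = Re (ip (T (A y)) y)"
    using A hnorm_square[of "A y"] unfolding power2_eq_square by simp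
  also have "\<dots> \<le> hnorm ip (T (A y)) * hnorm ip y"
    by (rule order_trans[OF complex_Re_le_cmod norm_ip_le])
  also have "\<dots> \<le> opnorm ip T * hnorm ip (A y)"
    using mult_left_mono[OF y hnorm_nonneg[of "T (A y)"]] hnorm_apply_le[OF T, of "A y"] by simp
  finally have *: "hnorm ip (A y) * hnorm ip (A y) \<le> opnorm ip T * hnorm ip (A y)" .
  show "hnorm ip (A y) \<le> opnorm ip T"
  proof (cases "hnorm ip (A y) = 0")
    case True
    then show ?thesis using opnorm_nonneg[OF T] by simp
  next
    case False
    then have "hnorm ip (A y) > 0" using hnorm_nonneg[of "A y"] by simp
    then show ?thesis using mult_right_le_imp_le[OF *] by simp
  qed
qed

lemma symmetric_if_Im_ip_self_0:
  assumes T: "bounded_op sc ip T" and real: "\<And>x. Im (ip (T x) x) = 0"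
  shows "ip (T x) y = ip x (T y)"
proof -
  define b where "b = ip (T x) y"
  define c where "c = ip (T y) x"
  have "ip (T (x + y)) (x + y) = ip (T x) x + ip (T y) y + (b + c)"
    unfolding b_def c_def by (simp add: bounded_op_add[OF T] ip_add_left ip_add_right)
  then have "Im (b + c) = 0" using real[of "x + y"] real[of x] real[of y] by simp
  have "ip (T (x + sc \<i> y)) (x + sc \<i> y) = ip (T x) x + \<i> * c + cnj \<i> * (b + \<i> * ip (T y) y)"
    unfolding b_def c_def
    by (simp only: bounded_op_add[OF T] bounded_op_sc[OF T] ip_add_left ip_add_right ip_sc_left ip_sc_right)
  then have "Re c - Re b = 0" using real[of "x + sc \<i> y"] real[of x] real[of y] by simp
  with \<open>Im (b + c) = 0\<close> have "b = cnj c" by (simp add: complex_eq_iff)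
  then show ?thesis using ip_commute[of "T y" x] unfolding b_def c_def by simp
qed

lemma opnorm_real_part_le:
  assumes X: "bounded_op sc ip X" and Y: "bounded_op sc ip Y"
    and adjoint: "\<forall>x y. ip (X x) y = ip x (Y y)"
  shows "opnorm ip (\<lambda>x. sc (1/2) (X x + Y x)) \<le> opnorm ip X"
proof (rule opnorm_least)
  fix x assume x: "hnorm ip x \<le> 1"
  have "hnorm ip (sc (1/2) (X x + Y x)) \<le> (1/2) * (hnorm ip (X x) + hnorm ip (Y x))"
    using hnorm_triangle[of "X x" "Y x"] by (simp add: hnorm_sc)
  also have "\<dots> \<le> (1/2) * (opnorm ip X + opnorm ip Y)"
    using opnorm_upper[OF X x] opnorm_upper[OF Y x] by simp
  also have "\<dots> \<le> opnorm ip X" using opnorm_adjoint_le[OF X adjoint] by simp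
  finally show "hnorm ip (sc (1/2) (X x + Y x)) \<le> opnorm ip X" .
qed

end

section \<open>Operator systems\<close>

locale opsys = hilbert +
  fixes S :: "('h::ab_group_add \<Rightarrow> 'h) set"
  assumes opsys: "operator_system sc ip S"
begin

lemma bounded_op_mem: "T \<in> S \<Longrightarrow> bounded_op sc ip T"
  using opsys unfolding operator_system_def by blast

lemma zero_mem: "0 \<in> S"
  using opsys unfolding operator_system_def zero_fun_def by blast

lemma add_mem: "T \<in> S \<Longrightarrow> U \<in> S \<Longrightarrow> T + U \<in> S"
  using opsys unfolding operator_system_def plus_fun_def by blast

lemma sc_mem: "T \<in> S \<Longrightarrow> (\<lambda>x. sc a (T x)) \<in> S"
  using opsys unfolding operator_system_def by blast

lemma adj_mem: "T \<in> S \<Longrightarrow> adj ip T \<in> S"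
  using opsys unfolding operator_system_def by blast

lemma diff_mem: "T \<in> S \<Longrightarrow> U \<in> S \<Longrightarrow> T - U \<in> S"
  using add_mem[of T "\<lambda>x. sc (- 1) (U x)"] sc_mem[of U "- 1"] by (simp add: fun_diff_def plus_fun_def)

lemma pos_cone_subset: "pos_cone ip S \<subseteq> S"
  unfolding pos_cone_def by blast

lemma sa_part_symmetric: "A \<in> sa_part ip S \<Longrightarrow> ip (A x) y = ip x (A y)"
  using ip_adj[OF bounded_op_mem] unfolding sa_part_def by fastforce

lemma sa_partI: "A \<in> S \<Longrightarrow> (\<And>x y. ip (A x) y = ip x (A y)) \<Longrightarrow> A \<in> sa_part ip S"
  unfolding sa_part_def using adj_eqI by blast

lemma pos_cone_symmetric: "p \<in> pos_cone ip S \<Longrightarrow> ip (p x) y = ip x (p y)"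
  unfolding pos_cone_def pos_op_def by (blast intro: symmetric_if_Im_ip_self_0 bounded_op_mem)

lemma quasistate_add:
  "\<phi> \<in> quasistates sc ip S \<Longrightarrow> T \<in> S \<Longrightarrow> U \<in> S \<Longrightarrow> \<phi> (T + U) = \<phi> T + \<phi> U"
  unfolding quasistates_def plus_fun_def by blast

lemma quasistate_sc: "\<phi> \<in> quasistates sc ip S \<Longrightarrow> T \<in> S \<Longrightarrow> \<phi> (\<lambda>x. sc a (T x)) = a * \<phi> T"
  unfolding quasistates_def by blast

lemma quasistate_bound: "\<phi> \<in> quasistates sc ip S \<Longrightarrow> T \<in> S \<Longrightarrow> cmod (\<phi> T) \<le> opnorm ip T"
  unfolding quasistates_def by blast

lemma quasistate_outside: "\<phi> \<in> quasistates sc ip S \<Longrightarrow> T \<notin> S \<Longrightarrow> \<phi> T = 0"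
  unfolding quasistates_def by blast

lemma quasistate_diff:
  assumes "\<phi> \<in> quasistates sc ip S" "T \<in> S" "U \<in> S"
  shows "\<phi> (T - U) = \<phi> T - \<phi> U"
  using quasistate_add[OF assms(1) diff_mem[OF assms(2,3)] assms(3)] by simp

lemma zero_in_quasistates: "(\<lambda>_. 0) \<in> quasistates sc ip S"
  unfolding quasistates_def using opnorm_nonneg bounded_op_mem by auto

lemma quasistates_agree_on_sa_part:
  assumes apg: "approx_pos_generated ip S"
    and \<phi>: "\<phi> \<in> quasistates sc ip S" and \<psi>: "\<psi> \<in> quasistates sc ip S"
    and agree: "\<And>p. p \<in> pos_cone ip S \<Longrightarrow> \<phi> p = \<psi> p"
    and A: "A \<in> sa_part ip S"
  shows "\<phi> A = \<psi> A"
proof -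
  have AS: "A \<in> S" using A unfolding sa_part_def by blast
  have "cmod (\<phi> A - \<psi> A) \<le> 0 + e" if e: "e > 0" for e
  proof -
    obtain p q where p: "p \<in> pos_cone ip S" and q: "q \<in> pos_cone ip S"
      and close: "opnorm ip (A - (p - q)) < e / 2"
      using apg A e unfolding approx_pos_generated_def fun_diff_def
      by (metis half_gt_zero)
    have pqS: "p \<in> S" "q \<in> S" using p q pos_cone_subset by blast+
    have DS: "A - (p - q) \<in> S" by (rule diff_mem[OF AS diff_mem[OF pqS]])
    have "\<phi> A - \<psi> A = \<phi> (A - (p - q)) - \<psi> (A - (p - q))"
      using agree[OF p] agree[OF q] quasistate_diff[OF \<phi>] quasistate_diff[OF \<psi>] AS pqS diff_mem
      by simp
    then have "cmod (\<phi> A - \<psi> A) \<le> cmod (\<phi> (A - (p - q))) + cmod (\<psi> (A - (p - q)))"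
      by (simp add: norm_triangle_ineq4)
    also have "\<dots> \<le> 2 * opnorm ip (A - (p - q))"
      using quasistate_bound[OF \<phi> DS] quasistate_bound[OF \<psi> DS] by simp
    finally show ?thesis using close by simp
  qed
  then have "cmod (\<phi> A - \<psi> A) \<le> 0" by (rule field_le_epsilon)
  then show ?thesis by simp
qed

lemma cartesian_decomposition:
  assumes T: "T \<in> S"
  obtains A B where "A \<in> sa_part ip S" "B \<in> sa_part ip S" "T = A + (\<lambda>x. sc \<i> (B x))"
proof
  define T' where "T' = adj ip T"
  have T'S: "T' \<in> S" unfolding T'_def by (rule adj_mem[OF T])
  have T_T': "ip (T x) y = ip x (T' y)" for x y unfolding T'_def by (rule ip_adj[OF bounded_op_mem[OF T]])
  have T'_T: "ip (T' x) y = ip x (T y)" for x y using T_T'[of y x] ip_commute by metis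
  show "(\<lambda>x. sc (1/2) (T x + T' x)) \<in> sa_part ip S"
    using sc_mem[OF add_mem[OF T T'S]]
    by (intro sa_partI) (simp_all add: plus_fun_def ip_sc_left ip_sc_right ip_add_left ip_add_right T_T' T'_T)
  show "(\<lambda>x. sc (- \<i> / 2) (T x - T' x)) \<in> sa_part ip S"
    using sc_mem[OF diff_mem[OF T T'S]]
    by (intro sa_partI) (simp_all add: fun_diff_def ip_sc_left ip_sc_right ip_diff_left ip_diff_right
        T_T' T'_T algebra_simps)
  have "sc (1/2) (T x + T' x) + sc \<i> (sc (- \<i> / 2) (T x - T' x)) = T x" for x
  proof -
    have "sc (1/2) (T x + T' x) + sc \<i> (sc (- \<i> / 2) (T x - T' x))
        = (sc (1/2) (T x) + sc (1/2) (T x)) + (sc (1/2) (T' x) - sc (1/2) (T' x))"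
      by (simp add: sc_sc sc_add_right sc_diff_right algebra_simps)
    also have "\<dots> = T x" using sc_add_left[of "1/2" "1/2" "T x"] by simp
    finally show ?thesis .
  qed
  then show "T = (\<lambda>x. sc (1/2) (T x + T' x)) + (\<lambda>x. sc \<i> (sc (- \<i> / 2) (T x - T' x)))"
    by (simp add: fun_eq_iff)
qed

lemma quasistates_eqI:
  assumes \<phi>: "\<phi> \<in> quasistates sc ip S" and \<psi>: "\<psi> \<in> quasistates sc ip S"
    and agree: "\<And>A. A \<in> sa_part ip S \<Longrightarrow> \<phi> A = \<psi> A"
  shows "\<phi> = \<psi>"
proof
  fix T
  show "\<phi> T = \<psi> T"
  proof (cases "T \<in> S")
    case False
    then show ?thesis using quasistate_outside[OF \<phi>] quasistate_outside[OF \<psi>] by simp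
  next
    case True
    then obtain A B where A: "A \<in> sa_part ip S" and B: "B \<in> sa_part ip S"
      and T: "T = A + (\<lambda>x. sc \<i> (B x))"
      by (rule cartesian_decomposition)
    have AS: "A \<in> S" and BS: "B \<in> S" using A B unfolding sa_part_def by auto
    show ?thesis
      using agree[OF A] agree[OF B] unfolding T
      by (simp add: quasistate_add[OF \<phi> AS sc_mem[OF BS]] quasistate_add[OF \<psi> AS sc_mem[OF BS]]
          quasistate_sc[OF \<phi> BS] quasistate_sc[OF \<psi> BS])
  qed
qed

theorem separates_points_if_approx_pos_generated:
  assumes "approx_pos_generated ip S"
  shows "separates_points (pos_cone ip S) (quasistates sc ip S)"
  unfolding separates_points_def
  using quasistates_eqI quasistates_agree_on_sa_part[OF assms] by metis

sublocale real_ops: sublinear_on S "\<lambda>r T x. sc (complex_of_real r) (T x)" "opnorm ip"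
proof
  show "0 \<in> S" by (rule zero_mem)
  show "T + U \<in> S" if "T \<in> S" "U \<in> S" for T U using add_mem[OF that] .
  show "(\<lambda>x. sc (complex_of_real r) (T x)) \<in> S" if "T \<in> S" for r T using sc_mem[OF that] .
  show "(\<lambda>x. sc (complex_of_real a) ((T + U) x))
      = (\<lambda>x. sc (complex_of_real a) (T x)) + (\<lambda>x. sc (complex_of_real a) (U x))" for a T U
    by (simp add: fun_eq_iff sc_add_right)
  show "(\<lambda>x. sc (complex_of_real (a + b)) (T x))
      = (\<lambda>x. sc (complex_of_real a) (T x)) + (\<lambda>x. sc (complex_of_real b) (T x))" for a b T
    by (simp add: fun_eq_iff sc_add_left)
  show "(\<lambda>x. sc (complex_of_real a) (sc (complex_of_real b) (T x)))
      = (\<lambda>x. sc (complex_of_real (a * b)) (T x))" for a b T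
    by (simp add: sc_sc)
  show "(\<lambda>x. sc (complex_of_real 1) (T x)) = T" for T by simp
  show "opnorm ip (T + U) \<le> opnorm ip T + opnorm ip U" if "T \<in> S" "U \<in> S" for T U
    using opnorm_add_le[OF bounded_op_mem bounded_op_mem] that .
  show "opnorm ip (\<lambda>x. sc (complex_of_real r) (T x)) = r * opnorm ip T" if "0 < r" "T \<in> S" for r T
    using opnorm_sc[OF bounded_op_mem bounded_op_mem[OF sc_mem], of T "complex_of_real r"] that by simp
qed

definition pos_diffs :: "('h \<Rightarrow> 'h) set" where
  "pos_diffs = {p - q | p q. p \<in> pos_cone ip S \<and> q \<in> pos_cone ip S}"

definition pos_span :: "('h \<Rightarrow> 'h) set" where
  "pos_span = {d1 + (\<lambda>x. sc \<i> (d2 x)) | d1 d2. d1 \<in> pos_diffs \<and> d2 \<in> pos_diffs}"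

lemma pos_cone_add: "p \<in> pos_cone ip S \<Longrightarrow> q \<in> pos_cone ip S \<Longrightarrow> p + q \<in> pos_cone ip S"
  unfolding pos_cone_def pos_op_def by (auto simp: add_mem ip_add_left)

lemma pos_cone_smul:
  "p \<in> pos_cone ip S \<Longrightarrow> 0 \<le> r \<Longrightarrow> (\<lambda>x. sc (complex_of_real r) (p x)) \<in> pos_cone ip S"
  unfolding pos_cone_def pos_op_def by (auto simp: sc_mem ip_sc_left)

lemma pos_diffs_subset: "pos_diffs \<subseteq> S"
  unfolding pos_diffs_def using diff_mem pos_cone_subset by blast

lemma pos_diffs_symmetric:
  assumes "d \<in> pos_diffs"
  shows "ip (d x) y = ip x (d y)"
proof -
  obtain p q where "d = p - q" "p \<in> pos_cone ip S" "q \<in> pos_cone ip S"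
    using assms unfolding pos_diffs_def by blast
  then show ?thesis
    using pos_cone_symmetric[of p x y] pos_cone_symmetric[of q x y] by (simp add: ip_diff_left ip_diff_right)
qed

lemma pos_diffs_add: "d \<in> pos_diffs \<Longrightarrow> d' \<in> pos_diffs \<Longrightarrow> d + d' \<in> pos_diffs"
proof -
  assume "d \<in> pos_diffs" "d' \<in> pos_diffs"
  then obtain p q p' q' where "d = p - q" "d' = p' - q'"
    and "p \<in> pos_cone ip S" "q \<in> pos_cone ip S" "p' \<in> pos_cone ip S" "q' \<in> pos_cone ip S"
    unfolding pos_diffs_def by blast
  moreover have "(p - q) + (p' - q') = (p + p') - (q + q')" by (simp add: algebra_simps)
  ultimately show ?thesis unfolding pos_diffs_def using pos_cone_add by blast
qed

lemma pos_diffs_smul: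
  assumes "d \<in> pos_diffs"
  shows "(\<lambda>x. sc (complex_of_real r) (d x)) \<in> pos_diffs"
proof -
  obtain p q where d: "d = p - q" and pq: "p \<in> pos_cone ip S" "q \<in> pos_cone ip S"
    using assms unfolding pos_diffs_def by blast
  show ?thesis
  proof (cases "0 \<le> r")
    case True
    have "(\<lambda>x. sc (complex_of_real r) (d x))
        = (\<lambda>x. sc (complex_of_real r) (p x)) - (\<lambda>x. sc (complex_of_real r) (q x))"
      unfolding d by (simp add: fun_eq_iff sc_diff_right)
    then show ?thesis
      unfolding pos_diffs_def using pos_cone_smul[OF pq(1) True] pos_cone_smul[OF pq(2) True] by blast
  next
    case False
    then have "0 \<le> - r" by simp
    have "(\<lambda>x. sc (complex_of_real r) (d x))
        = (\<lambda>x. sc (complex_of_real (- r)) (q x)) - (\<lambda>x. sc (complex_of_real (- r)) (p x))"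
      unfolding d by (simp add: fun_eq_iff sc_diff_right sc_minus_left)
    then show ?thesis
      unfolding pos_diffs_def using pos_cone_smul[OF pq(2) \<open>0 \<le> - r\<close>] pos_cone_smul[OF pq(1) \<open>0 \<le> - r\<close>]
      by blast
  qed
qed

lemma pos_spanI:
  "d1 \<in> pos_diffs \<Longrightarrow> d2 \<in> pos_diffs \<Longrightarrow> d1 + (\<lambda>x. sc \<i> (d2 x)) \<in> pos_span"
  unfolding pos_span_def by blast

lemma pos_span_subset: "pos_span \<subseteq> S"
proof
  fix m assume "m \<in> pos_span"
  then obtain d1 d2 where "m = d1 + (\<lambda>x. sc \<i> (d2 x))" "d1 \<in> pos_diffs" "d2 \<in> pos_diffs"
    unfolding pos_span_def by blast
  then show "m \<in> S" using pos_diffs_subset by (auto intro!: add_mem sc_mem)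
qed

lemma zero_mem_pos_cone: "0 \<in> pos_cone ip S"
  unfolding pos_cone_def pos_op_def using zero_mem by simp

lemma pos_diff_mem_pos_span:
  assumes "p \<in> pos_cone ip S" "q \<in> pos_cone ip S"
  shows "p - q \<in> pos_span" and "(\<lambda>x. sc \<i> ((p - q) x)) \<in> pos_span"
proof -
  have pq: "p - q \<in> pos_diffs" and zero: "0 - 0 \<in> pos_diffs"
    unfolding pos_diffs_def using assms zero_mem_pos_cone by blast+
  have "p - q = (p - q) + (\<lambda>x. sc \<i> ((0 - 0) x))"
    and "(\<lambda>x. sc \<i> ((p - q) x)) = (0 - 0) + (\<lambda>x. sc \<i> ((p - q) x))"
    by (simp_all add: fun_eq_iff)
  then show "p - q \<in> pos_span" "(\<lambda>x. sc \<i> ((p - q) x)) \<in> pos_span"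
    using pos_spanI[OF pq zero] pos_spanI[OF zero pq] by simp_all
qed

lemma pos_span_zero: "0 \<in> pos_span"
  using pos_diff_mem_pos_span(1)[OF zero_mem_pos_cone zero_mem_pos_cone] by simp

lemma pos_span_add:
  assumes "m \<in> pos_span" "m' \<in> pos_span"
  shows "m + m' \<in> pos_span"
proof -
  obtain a b a' b' where m: "m = a + (\<lambda>x. sc \<i> (b x))" "m' = a' + (\<lambda>x. sc \<i> (b' x))"
    and ab: "a \<in> pos_diffs" "b \<in> pos_diffs" "a' \<in> pos_diffs" "b' \<in> pos_diffs"
    using assms unfolding pos_span_def by blast
  have "m + m' = (a + a') + (\<lambda>x. sc \<i> ((b + b') x))"
    unfolding m by (simp add: fun_eq_iff sc_add_right algebra_simps)
  then show ?thesis using pos_spanI[OF pos_diffs_add[OF ab(1,3)] pos_diffs_add[OF ab(2,4)]] by simp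
qed

lemma pos_span_smul:
  assumes "m \<in> pos_span"
  shows "(\<lambda>x. sc (complex_of_real r) (m x)) \<in> pos_span"
proof -
  obtain a b where m: "m = a + (\<lambda>x. sc \<i> (b x))" and ab: "a \<in> pos_diffs" "b \<in> pos_diffs"
    using assms unfolding pos_span_def by blast
  have "(\<lambda>x. sc (complex_of_real r) (m x))
      = (\<lambda>x. sc (complex_of_real r) (a x)) + (\<lambda>x. sc \<i> (sc (complex_of_real r) (b x)))"
    unfolding m by (simp add: fun_eq_iff sc_add_right sc_sc mult.commute)
  then show ?thesis using pos_spanI[OF pos_diffs_smul[OF ab(1)] pos_diffs_smul[OF ab(2)]] by simp
qed

lemma pos_span_diff: "m \<in> pos_span \<Longrightarrow> m' \<in> pos_span \<Longrightarrow> m - m' \<in> pos_span"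
  using pos_span_add[of m "\<lambda>x. sc (complex_of_real (- 1)) (m' x)"] pos_span_smul[of m' "- 1"]
  by (simp add: fun_diff_def plus_fun_def)

text \<open>Taking real parts does not increase norms, and the real part of \<open>T\<^sub>0 - (d\<^sub>1 + i d\<^sub>2)\<close>
  is \<open>T\<^sub>0 - d\<^sub>1\<close>.\<close>

lemma opnorm_diff_pos_span_ge:
  assumes T0: "T0 \<in> sa_part ip S"
    and far: "\<And>p q. p \<in> pos_cone ip S \<Longrightarrow> q \<in> pos_cone ip S \<Longrightarrow> e \<le> opnorm ip (T0 - (p - q))"
    and m: "m \<in> pos_span"
  shows "e \<le> opnorm ip (T0 - m)"
proof -
  obtain d1 d2 where m_eq: "m = d1 + (\<lambda>x. sc \<i> (d2 x))" and d: "d1 \<in> pos_diffs" "d2 \<in> pos_diffs"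
    using m unfolding pos_span_def by blast
  obtain p q where d1: "d1 = p - q" and pq: "p \<in> pos_cone ip S" "q \<in> pos_cone ip S"
    using d(1) unfolding pos_diffs_def by blast
  have T0S: "T0 \<in> S" using T0 unfolding sa_part_def by blast
  have dS: "d1 \<in> S" "d2 \<in> S" using d pos_diffs_subset by blast+
  define X where "X = T0 - d1 - (\<lambda>x. sc \<i> (d2 x))"
  define Y where "Y = T0 - d1 + (\<lambda>x. sc \<i> (d2 x))"
  have XS: "X \<in> S" and YS: "Y \<in> S"
    unfolding X_def Y_def using T0S dS by (simp_all add: diff_mem add_mem sc_mem)
  have "\<forall>x y. ip (X x) y = ip x (Y y)"
    unfolding X_def Y_def
    by (simp add: ip_diff_left ip_diff_right ip_add_right ip_sc_left ip_sc_right
        sa_part_symmetric[OF T0] pos_diffs_symmetric[OF d(1)] pos_diffs_symmetric[OF d(2)])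
  then have "opnorm ip (\<lambda>x. sc (1/2) (X x + Y x)) \<le> opnorm ip X"
    by (rule opnorm_real_part_le[OF bounded_op_mem[OF XS] bounded_op_mem[OF YS]])
  moreover have "(\<lambda>x. sc (1/2) (X x + Y x)) = T0 - (p - q)"
  proof
    fix x
    have "X x + Y x = (T0 x - d1 x) + (T0 x - d1 x)" unfolding X_def Y_def by simp
    then have "sc (1/2) (X x + Y x) = sc (1/2 + 1/2) (T0 x - d1 x)" by (simp only: sc_add_right sc_add_left)
    then show "sc (1/2) (X x + Y x) = (T0 - (p - q)) x" using d1 by simp
  qed
  moreover have "X = T0 - m" unfolding X_def m_eq by (simp add: algebra_simps)
  ultimately show ?thesis using far[OF pq] by simp
qed

definition pos_span_graph :: "('h \<Rightarrow> 'h) \<Rightarrow> real \<Rightarrow> (('h \<Rightarrow> 'h) \<times> real) set" where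
  "pos_span_graph T0 e = {(m + (\<lambda>x. sc (complex_of_real t) (T0 x)), t * e) | m t. m \<in> pos_span}"

lemma pos_span_graphI:
  "m \<in> pos_span \<Longrightarrow> (m + (\<lambda>x. sc (complex_of_real t) (T0 x)), t * e) \<in> pos_span_graph T0 e"
  unfolding pos_span_graph_def by blast

context
  fixes T0 :: "'h \<Rightarrow> 'h" and e :: real
  assumes T0: "T0 \<in> S" and e: "0 < e"
    and far: "\<And>m. m \<in> pos_span \<Longrightarrow> e \<le> opnorm ip (T0 - m)"
begin

lemma not_mem_pos_span: "T0 \<notin> pos_span"
proof
  assume "T0 \<in> pos_span"
  from far[OF this] have "e \<le> opnorm ip (T0 - T0)" .
  also have "opnorm ip (T0 - T0) \<le> 0" by (rule opnorm_least) simp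
  finally show False using e by simp
qed

lemma pos_span_graph_le:
  assumes "(x, a) \<in> pos_span_graph T0 e"
  shows "x \<in> S" and "a \<le> opnorm ip x"
proof -
  obtain m t where x: "x = m + (\<lambda>x. sc (complex_of_real t) (T0 x))" and a: "a = t * e"
    and m: "m \<in> pos_span" using assms unfolding pos_span_graph_def by blast
  show xS: "x \<in> S" unfolding x using m pos_span_subset T0 by (blast intro: add_mem sc_mem)
  show "a \<le> opnorm ip x"
  proof (cases "t > 0")
    case False
    then have "a \<le> 0" using e unfolding a by (simp add: mult_nonpos_nonneg)
    also have "0 \<le> opnorm ip x" by (rule opnorm_nonneg[OF bounded_op_mem[OF xS]])
    finally show ?thesis .
  next
    case True
    define m' where "m' = (\<lambda>x. sc (complex_of_real (- 1 / t)) (m x))"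
    have m': "m' \<in> pos_span" unfolding m'_def by (rule pos_span_smul[OF m])
    have "x = (\<lambda>y. sc (complex_of_real t) ((T0 - m') y))"
      using True unfolding x m'_def by (simp add: fun_eq_iff sc_diff_right sc_sc)
    then have "opnorm ip x = t * opnorm ip (T0 - m')"
      using real_ops.pos_homogeneous[OF True diff_mem[OF T0 subsetD[OF pos_span_subset m']]] by simp
    then show ?thesis unfolding a using far[OF m'] True by simp
  qed
qed

lemma pos_span_graph_unique:
  assumes "(x, a) \<in> pos_span_graph T0 e" and "(x, b) \<in> pos_span_graph T0 e"
  shows "a = b"
proof -
  obtain m t m' t' where x: "x = m + (\<lambda>x. sc (complex_of_real t) (T0 x))"
    "x = m' + (\<lambda>x. sc (complex_of_real t') (T0 x))" and ab: "a = t * e" "b = t' * e"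
    and m: "m \<in> pos_span" "m' \<in> pos_span"
    using assms unfolding pos_span_graph_def by blast
  have "t = t'"
  proof (rule ccontr)
    assume "t \<noteq> t'"
    have "(\<lambda>x. sc (complex_of_real t) (T0 x)) - (\<lambda>x. sc (complex_of_real t') (T0 x)) = m' - m"
      using x by (simp add: algebra_simps eq_diff_eq diff_eq_eq)
    then have "m' x - m x = sc (complex_of_real (t - t')) (T0 x)" for x
      by (metis minus_apply sc_diff_left of_real_diff)
    then have "T0 = (\<lambda>x. sc (complex_of_real (1 / (t - t'))) ((m' - m) x))"
      using \<open>t \<noteq> t'\<close> by (simp add: fun_eq_iff sc_sc)
    then show False using pos_span_smul pos_span_diff m not_mem_pos_span by metis
  qed
  then show "a = b" using ab by simp
qed

lemma dominated_graph_pos_span_graph: "real_ops.dominated_graph (pos_span_graph T0 e)"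
  unfolding real_ops.dominated_graph_def
proof (intro conjI allI impI)
  fix x a assume "(x, a) \<in> pos_span_graph T0 e"
  then show "x \<in> S" "a \<le> opnorm ip x" by (rule pos_span_graph_le)+
next
  fix x a y b assume "(x, a) \<in> pos_span_graph T0 e" "(y, b) \<in> pos_span_graph T0 e"
  then obtain m t m' t' where "x = m + (\<lambda>x. sc (complex_of_real t) (T0 x))" "a = t * e"
    "y = m' + (\<lambda>x. sc (complex_of_real t') (T0 x))" "b = t' * e" "m \<in> pos_span" "m' \<in> pos_span"
    unfolding pos_span_graph_def by blast
  moreover from this have "x + y = (m + m') + (\<lambda>x. sc (complex_of_real (t + t')) (T0 x))"
    "a + b = (t + t') * e" by (simp_all add: fun_eq_iff sc_add_left algebra_simps)
  ultimately show "(x + y, a + b) \<in> pos_span_graph T0 e" using pos_span_graphI pos_span_add by metis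
next
  fix r x a assume "(x, a) \<in> pos_span_graph T0 e"
  then obtain m t where "x = m + (\<lambda>x. sc (complex_of_real t) (T0 x))" "a = t * e" "m \<in> pos_span"
    unfolding pos_span_graph_def by blast
  moreover from this have "(\<lambda>y. sc (complex_of_real r) (x y))
      = (\<lambda>y. sc (complex_of_real r) (m y)) + (\<lambda>x. sc (complex_of_real (r * t)) (T0 x))"
    "r * a = (r * t) * e" by (simp_all add: fun_eq_iff sc_add_right sc_sc)
  ultimately show "((\<lambda>y. sc (complex_of_real r) (x y)), r * a) \<in> pos_span_graph T0 e"
    using pos_span_graphI pos_span_smul by metis
next
  fix x a b assume "(x, a) \<in> pos_span_graph T0 e" "(x, b) \<in> pos_span_graph T0 e"
  then show "a = b" by (rule pos_span_graph_unique)
qed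

lemma exists_functional_vanishing_on_pos_span:
  obtains h where "h T0 = e" and "\<And>m. m \<in> pos_span \<Longrightarrow> h m = 0"
    and "\<And>T. T \<in> S \<Longrightarrow> h T \<le> opnorm ip T"
    and "\<And>T U. T \<in> S \<Longrightarrow> U \<in> S \<Longrightarrow> h (T + U) = h T + h U"
    and "\<And>r T. T \<in> S \<Longrightarrow> h (\<lambda>x. sc (complex_of_real r) (T x)) = r * h T"
proof -
  have "pos_span_graph T0 e \<noteq> {}" using pos_span_graphI[OF pos_span_zero] by blast
  with dominated_graph_pos_span_graph obtain h
    where h_graph: "\<And>x a. (x, a) \<in> pos_span_graph T0 e \<Longrightarrow> h x = a"
    and "\<And>T. T \<in> S \<Longrightarrow> h T \<le> opnorm ip T"
    and "\<And>T U. T \<in> S \<Longrightarrow> U \<in> S \<Longrightarrow> h (T + U) = h T + h U"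
    and "\<And>r T. T \<in> S \<Longrightarrow> h (\<lambda>x. sc (complex_of_real r) (T x)) = r * h T"
    by (rule real_ops.hahn_banach) blast
  moreover have "h T0 = e" using h_graph[OF pos_span_graphI[OF pos_span_zero, of 1]] by simp
  moreover have "h m = 0" if "m \<in> pos_span" for m
    using h_graph[OF pos_span_graphI[OF that, of 0]] by (simp add: zero_fun_def[symmetric])
  ultimately show ?thesis using that by blast
qed

end

definition complexification :: "(('h \<Rightarrow> 'h) \<Rightarrow> real) \<Rightarrow> ('h \<Rightarrow> 'h) \<Rightarrow> complex" where
  "complexification h T =
     (if T \<in> S then complex_of_real (h T) - \<i> * complex_of_real (h (\<lambda>x. sc \<i> (T x))) else 0)"

lemma Re_complexification: "T \<in> S \<Longrightarrow> Re (complexification h T) = h T"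
  by (simp add: complexification_def)

context
  fixes h :: "('h \<Rightarrow> 'h) \<Rightarrow> real"
  assumes h_add: "\<And>T U. T \<in> S \<Longrightarrow> U \<in> S \<Longrightarrow> h (T + U) = h T + h U"
    and h_smul: "\<And>r T. T \<in> S \<Longrightarrow> h (\<lambda>x. sc (complex_of_real r) (T x)) = r * h T"
begin

lemma complexification_add:
  assumes T: "T \<in> S" and U: "U \<in> S"
  shows "complexification h (T + U) = complexification h T + complexification h U"
proof -
  have "(\<lambda>x. sc \<i> ((T + U) x)) = (\<lambda>x. sc \<i> (T x)) + (\<lambda>x. sc \<i> (U x))"
    by (simp add: fun_eq_iff sc_add_right)
  then show ?thesis
    using add_mem[OF T U] h_add[OF T U] h_add[OF sc_mem[OF T] sc_mem[OF U]] T U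
    by (simp add: complexification_def algebra_simps)
qed

lemma complexification_sc:
  assumes T: "T \<in> S"
  shows "complexification h (\<lambda>x. sc a (T x)) = a * complexification h T"
proof -
  define r where "r = Re a"
  define s where "s = Im a"
  have a: "a = complex_of_real r + \<i> * complex_of_real s" by (simp add: r_def s_def complex_eq_iff)
  have iT: "(\<lambda>x. sc \<i> (T x)) \<in> S" by (rule sc_mem[OF T])
  have "(\<lambda>x. sc a (T x)) = (\<lambda>x. sc (complex_of_real r) (T x)) + (\<lambda>x. sc (complex_of_real s) (sc \<i> (T x)))"
    by (simp add: fun_eq_iff a sc_add_left sc_sc mult.commute)
  then have h1: "h (\<lambda>x. sc a (T x)) = r * h T + s * h (\<lambda>x. sc \<i> (T x))"
    using h_add[OF sc_mem[OF T] sc_mem[OF iT]] h_smul[OF T] h_smul[OF iT] by simp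
  have "(\<lambda>x. sc \<i> (sc a (T x)))
      = (\<lambda>x. sc (complex_of_real r) (sc \<i> (T x))) + (\<lambda>x. sc (complex_of_real (- s)) (T x))"
    by (simp add: fun_eq_iff a sc_sc sc_add_left[symmetric] algebra_simps)
  then have h2: "h (\<lambda>x. sc \<i> (sc a (T x))) = r * h (\<lambda>x. sc \<i> (T x)) - s * h T"
    using h_add[OF sc_mem[OF iT] sc_mem[OF T]] h_smul[OF T, of "- s"] h_smul[OF iT] by simp
  show ?thesis
    using T sc_mem[OF T] h1 h2 by (simp add: complexification_def a complex_eq_iff algebra_simps)
qed

text \<open>Rotating T by the phase of its value reduces the bound to one on the real part.\<close>

lemma norm_complexification_le:
  assumes bound: "\<And>T. T \<in> S \<Longrightarrow> h T \<le> opnorm ip T" and T: "T \<in> S"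
  shows "cmod (complexification h T) \<le> opnorm ip T"
proof (cases "complexification h T = 0")
  case True
  then show ?thesis using opnorm_nonneg[OF bounded_op_mem[OF T]] by simp
next
  case False
  define z where "z = complexification h T"
  define c where "c = cnj z / complex_of_real (cmod z)"
  have z: "cmod z > 0" using False unfolding z_def by simp
  have "c * z = (z * cnj z) / complex_of_real (cmod z)" unfolding c_def by (simp add: mult.commute)
  also have "z * cnj z = complex_of_real ((cmod z)\<^sup>2)" by (rule complex_norm_square[symmetric])
  finally have cz: "c * z = complex_of_real (cmod z)" using z by (simp add: power2_eq_square)
  have c: "cmod c = 1" unfolding c_def using z by (simp add: norm_divide)
  have "cmod z = Re (complexification h (\<lambda>x. sc c (T x)))"
    using complexification_sc[OF T] cz unfolding z_def by simp
  also have "\<dots> = h (\<lambda>x. sc c (T x))" by (rule Re_complexification[OF sc_mem[OF T]])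
  also have "\<dots> \<le> opnorm ip (\<lambda>x. sc c (T x))" by (rule bound[OF sc_mem[OF T]])
  also have "\<dots> \<le> opnorm ip T" using opnorm_sc_le[OF bounded_op_mem[OF T], of c] c by simp
  finally show ?thesis unfolding z_def .
qed

lemma complexification_in_quasistates:
  assumes bound: "\<And>T. T \<in> S \<Longrightarrow> h T \<le> opnorm ip T"
    and vanish: "\<And>m. m \<in> pos_span \<Longrightarrow> h m = 0"
  shows "complexification h \<in> quasistates sc ip S"
    and "\<And>p. p \<in> pos_cone ip S \<Longrightarrow> complexification h p = 0"
proof -
  show pos: "complexification h p = 0" if p: "p \<in> pos_cone ip S" for p
  proof -
    have "p \<in> pos_span" "(\<lambda>x. sc \<i> (p x)) \<in> pos_span"
      using pos_diff_mem_pos_span[OF p zero_mem_pos_cone] by simp_all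
    then show ?thesis using vanish pos_cone_subset p by (auto simp: complexification_def)
  qed
  show "complexification h \<in> quasistates sc ip S"
    unfolding quasistates_def
  proof (intro CollectI conjI allI ballI impI)
    show "complexification h T = 0" if "T \<notin> S" for T
      using that by (simp add: complexification_def)
    show "complexification h (\<lambda>x. T x + U x) = complexification h T + complexification h U"
      if "T \<in> S" "U \<in> S" for T U
      using complexification_add[OF that] by (simp add: plus_fun_def)
    show "complexification h (\<lambda>x. sc a (T x)) = a * complexification h T" if "T \<in> S" for a T
      by (rule complexification_sc[OF that])
    show "cmod (complexification h T) \<le> opnorm ip T" if "T \<in> S" for T
      by (rule norm_complexification_le[OF bound that])
    show "Im (complexification h p) = 0" "0 \<le> Re (complexification h p)"
      if "p \<in> pos_cone ip S" for p
      using pos[OF that] by simp_all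
  qed
qed

end

theorem approx_pos_generated_if_separates_points:
  assumes sep: "separates_points (pos_cone ip S) (quasistates sc ip S)"
  shows "approx_pos_generated ip S"
proof (rule ccontr)
  assume "\<not> approx_pos_generated ip S"
  then obtain T0 e where T0: "T0 \<in> sa_part ip S" and e: "e > 0"
    and far: "\<And>p q. p \<in> pos_cone ip S \<Longrightarrow> q \<in> pos_cone ip S \<Longrightarrow> e \<le> opnorm ip (T0 - (p - q))"
    unfolding approx_pos_generated_def fun_diff_def by (auto simp: not_less)
  have T0S: "T0 \<in> S" using T0 unfolding sa_part_def by blast
  obtain h where "h T0 = e" and vanish: "\<And>m. m \<in> pos_span \<Longrightarrow> h m = 0"
    and bound: "\<And>T. T \<in> S \<Longrightarrow> h T \<le> opnorm ip T"
    and add: "\<And>T U. T \<in> S \<Longrightarrow> U \<in> S \<Longrightarrow> h (T + U) = h T + h U"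
    and smul: "\<And>r T. T \<in> S \<Longrightarrow> h (\<lambda>x. sc (complex_of_real r) (T x)) = r * h T"
    using exists_functional_vanishing_on_pos_span[OF T0S e opnorm_diff_pos_span_ge[OF T0 far]]
    by blast
  note \<psi> = complexification_in_quasistates[OF add smul bound vanish]
  have "complexification h \<noteq> (\<lambda>_. 0)"
  proof
    assume "complexification h = (\<lambda>_. 0)"
    then have "h T0 = 0" using Re_complexification[OF T0S, of h] by simp
    then show False using \<open>h T0 = e\<close> e by simp
  qed
  then have "\<exists>p\<in>pos_cone ip S. complexification h p \<noteq> 0"
    using sep \<psi>(1) zero_in_quasistates unfolding separates_points_def by blast
  then show False using \<psi>(2) by blast
qed

end

theorem proposition8p2:
  fixes sc :: "complex \<Rightarrow> 'h::ab_group_add \<Rightarrow> 'h"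
    and ip :: "'h \<Rightarrow> 'h \<Rightarrow> complex"
    and S :: "('h \<Rightarrow> 'h) set"
  assumes "operator_system sc ip S"
  shows "approx_pos_generated ip S \<longleftrightarrow> separates_points (pos_cone ip S) (quasistates sc ip S)"
proof -
  interpret opsys sc ip S
    using assms by unfold_locales (simp_all add: operator_system_def)
  show ?thesis
    using separates_points_if_approx_pos_generated approx_pos_generated_if_separates_points by blast
qed

end
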